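(* For every integer $r\ge 3$ and every integer $n\ge 2r^2$, \[\frac{n^r}{2^{r+3}r^r}\le T_r(n)\le \frac{n^re^r}{r^r}.\]
   Context: For an integer $r\ge 2$, an $r$-graph is an $r$-uniform hypergraph, identified with its edge set. $K^r_n$ denotes the complete $r$-graph on $n$ vertices, and $F_r=K^r_{r+1}$. The $F_r$-bootstrap process in $K^r_n$ with initially infected $r$-graph $G_0\subseteq K^r_n$ is defined by: for $i\ge 1$, \[G_i=G_{i-1}\cup\{e\in K^r_n : \text{there is a copy } F'\subseteq K^r_n \text{ of } F_r \text{ with } e=F'\setminus G_{i-1}\},\] i.e. an $r$-set $e\notin G_{i-1}$ becomes infected at step $i$ if there is a vertex $w\notin e$ such that all other $r$-subsets of $e\cup\{w\}$ belong to $G_{i-1}$. The running time $T(F_r,G_0,n)$ is the first $i\ge 0$ with $G_i=G_{i+1}$. Define $T_r(n)=\max_{G_0\subseteq K^r_n}T(F_r,G_0,n)$. *)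

theory Defs
  imports Complex_Main
begin

definition complete_rgraph :: "nat \<Rightarrow> nat \<Rightarrow> nat set set" where
  "complete_rgraph r n = {e. e \<subseteq> {..<n} \<and> card e = r}"

text \<open>One step of the F_r-bootstrap process (F_r = K^r_{r+1}) in K^r_n:
  add every r-set e that is the unique uninfected edge of some copy of F_r,
  a copy being the set of all r-subsets of an (r+1)-subset S of the vertices.\<close>
definition boot_step :: "nat \<Rightarrow> nat \<Rightarrow> nat set set \<Rightarrow> nat set set" where
  "boot_step r n G = G \<union> {e \<in> complete_rgraph r n.
      \<exists>S. S \<subseteq> {..<n} \<and> card S = r + 1 \<and> {f. f \<subseteq> S \<and> card f = r} - G = {e}}"

definition boot_gen :: "nat \<Rightarrow> nat \<Rightarrow> nat set set \<Rightarrow> nat \<Rightarrow> nat set set" where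
  "boot_gen r n G0 i = (boot_step r n ^^ i) G0"

definition running_time :: "nat \<Rightarrow> nat \<Rightarrow> nat set set \<Rightarrow> nat" where
  "running_time r n G0 = (LEAST i. boot_gen r n G0 i = boot_gen r n G0 (Suc i))"

definition max_running_time :: "nat \<Rightarrow> nat \<Rightarrow> nat" where
  "max_running_time r n = Max (running_time r n ` Pow (complete_rgraph r n))"

end

theory Submission
  imports Defs
begin

text \<open>
  Every round before the process stabilises infects a new r-set, so
  \<open>T\<^sub>r(n) \<le> C(n, r) \<le> (e n / r)\<^sup>r\<close>.

  For the lower bound let \<open>m = n div 2r\<close> and split \<open>2mr\<close> vertices into r parts of
  2m vertices each, m main and m auxiliary ones. A point y of the grid \<open>[m]\<^sup>r\<close> stands
  for the r-set picking the main vertex \<open>y\<^sub>k\<close> in each part k. The snake (boustrophedon)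
  order visits all \<open>m\<^sup>r\<close> grid points so that consecutive points differ by one in a single
  coordinate; inserting between them the r-set in which that coordinate sits at an auxiliary
  vertex gives a path of \<open>2(m\<^sup>r - 1) + 1\<close> r-sets whose consecutive members span
  (r+1)-sets, the steps. Initially infect every r-set contained in a step, except the path
  members after the first. An (r+1)-set with three r-subsets contained in steps is itself a
  step; since \<open>r \<ge> 3\<close>, every (r+1)-set that triggers an infection has three infected
  r-subsets, so each round infects exactly the next member of the path, and the process runs
  for \<open>2(m\<^sup>r - 1) \<ge> n\<^sup>r / (2\<^sup>r\<^sup>+\<^sup>3 r\<^sup>r)\<close> rounds.
\<close>

section \<open>Upper bound\<close>

lemma subset_boot_step: "G \<subseteq> boot_step r n G"
  unfolding boot_step_def by auto

lemma boot_step_subset_complete_rgraph: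
  "G \<subseteq> complete_rgraph r n \<Longrightarrow> boot_step r n G \<subseteq> complete_rgraph r n"
  unfolding boot_step_def by auto

lemma boot_gen_0: "boot_gen r n G 0 = G"
  by (simp add: boot_gen_def)

lemma boot_gen_Suc: "boot_gen r n G (Suc i) = boot_step r n (boot_gen r n G i)"
  by (simp add: boot_gen_def)

lemma finite_complete_rgraph: "finite (complete_rgraph r n)"
  unfolding complete_rgraph_def by (rule finite_subset[of _ "Pow {..<n}"]) auto

lemma card_complete_rgraph: "card (complete_rgraph r n) = n choose r"
  unfolding complete_rgraph_def using n_subsets[of "{..<n}" r] by simp

lemma facets_eq_Diff_singleton:
  assumes "card S = Suc r"
  shows "{f. f \<subseteq> S \<and> card f = r} = (\<lambda>p. S - {p}) ` S"
proof -
  have "finite S"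
    using assms card.infinite by fastforce
  have "\<exists>p\<in>S. f = S - {p}" if f: "f \<subseteq> S" "card f = r" for f
  proof -
    have "f \<noteq> S"
      using f assms by auto
    then obtain p where "p \<in> S" "p \<notin> f"
      using f(1) by blast
    have "f = S - {p}"
      using f assms \<open>p \<notin> f\<close> \<open>p \<in> S\<close> \<open>finite S\<close> by (intro card_subset_eq) auto
    with \<open>p \<in> S\<close> show ?thesis
      by blast
  qed
  moreover have "card (S - {p}) = r" if "p \<in> S" for p
    using that assms \<open>finite S\<close> by simp
  ultimately show ?thesis
    by blast
qed

lemma funpow_inflationary_stabilises:
  assumes "finite A" and "X \<subseteq> A" and f: "\<And>Y. Y \<subseteq> A \<Longrightarrow> Y \<subseteq> f Y \<and> f Y \<subseteq> A"
  shows "\<exists>i \<le> card A. (f ^^ i) X = (f ^^ Suc i) X"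
proof (rule ccontr)
  assume no_fixpoint: "\<not> ?thesis"
  have iterate_subset: "(f ^^ i) X \<subseteq> A" for i
    by (induction i) (use assms in auto)
  have "i \<le> card ((f ^^ i) X)" if "i \<le> Suc (card A)" for i
    using that
  proof (induction i)
    case (Suc i)
    have "(f ^^ i) X \<subset> (f ^^ Suc i) X"
      using no_fixpoint Suc.prems f[OF iterate_subset] by fastforce
    then have "card ((f ^^ i) X) < card ((f ^^ Suc i) X)"
      using iterate_subset assms(1) by (meson finite_subset psubset_card_mono)
    with Suc show ?case by simp
  qed simp
  then have "Suc (card A) \<le> card ((f ^^ Suc (card A)) X)"
    by blast
  moreover have "card ((f ^^ Suc (card A)) X) \<le> card A"
    by (rule card_mono[OF assms(1) iterate_subset])
  ultimately show False
    by linarith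
qed

lemma running_time_le_binomial:
  assumes "G0 \<subseteq> complete_rgraph r n"
  shows "running_time r n G0 \<le> n choose r"
proof -
  obtain i where "i \<le> n choose r" "boot_gen r n G0 i = boot_gen r n G0 (Suc i)"
    using funpow_inflationary_stabilises[OF finite_complete_rgraph assms, of "boot_step r n"]
      subset_boot_step boot_step_subset_complete_rgraph
    unfolding boot_gen_def card_complete_rgraph by blast
  then show ?thesis
    unfolding running_time_def by (meson Least_le le_trans)
qed

lemma running_time_le_max_running_time:
  "G0 \<subseteq> complete_rgraph r n \<Longrightarrow> running_time r n G0 \<le> max_running_time r n"
  unfolding max_running_time_def by (auto intro: Max_ge simp: finite_complete_rgraph)

lemma max_running_time_le_binomial: "max_running_time r n \<le> n choose r"
  unfolding max_running_time_def
  by (subst Max_le_iff) (auto simp: finite_complete_rgraph running_time_le_binomial)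

lemma pow_div_fact_le_exp:
  fixes x :: real
  assumes "0 \<le> x"
  shows "x ^ k / fact k \<le> exp x"
proof -
  obtain t where t: "exp x = (\<Sum>i<Suc k. x ^ i / fact i) + exp t / fact (Suc k) * x ^ Suc k"
    using Maclaurin_exp_le[of x "Suc k"] by blast
  have "x ^ k / fact k \<le> (\<Sum>i<Suc k. x ^ i / fact i)"
    by (rule member_le_sum) (use assms in auto)
  also have "\<dots> \<le> exp x"
    unfolding t using assms by simp
  finally show ?thesis .
qed

lemma binomial_le_exp_pow:
  "real (n choose k) \<le> real n ^ k * exp (real k) / real k ^ k"
proof -
  have "real (n choose k) * fact k \<le> real n ^ k"
    by (metis binomial_fact_pow of_nat_fact of_nat_le_iff of_nat_mult of_nat_power)
  then have "real (n choose k) \<le> real n ^ k / fact k"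
    by (simp add: field_simps)
  also have "\<dots> \<le> real n ^ k * exp (real k) / real k ^ k"
  proof -
    have "real k ^ k / fact k \<le> exp (real k)"
      by (rule pow_div_fact_le_exp) simp
    moreover have "real k ^ k > 0"
      by (cases "k = 0") simp_all
    ultimately show ?thesis
      by (simp add: field_simps) (metis mult.assoc mult_right_mono zero_le_power of_nat_0_le_iff)
  qed
  finally show ?thesis .
qed

section \<open>The snake Gray code\<close>

fun gray :: "nat \<Rightarrow> nat \<Rightarrow> nat \<Rightarrow> nat \<Rightarrow> nat" where
  "gray m 0 t = (\<lambda>_. 0)"
| "gray m (Suc d) t = (let q = t div m ^ d; s = t mod m ^ d in
     (gray m d (if even q then s else m ^ d - 1 - s))(d := q))"

lemma gray_Suc_eq:
  "s < m ^ d \<Longrightarrow>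
    gray m (Suc d) (q * m ^ d + s) = (gray m d (if even q then s else m ^ d - 1 - s))(d := q)"
  by (cases "m ^ d = 0") (simp_all add: Let_def)

declare gray.simps(2) [simp del]

lemma gray_beyond: "d \<le> k \<Longrightarrow> gray m d t k = 0"
  by (induction d arbitrary: t) (auto simp: gray.simps(2) Let_def)

lemma gray_less: "t < m ^ d \<Longrightarrow> k < d \<Longrightarrow> gray m d t k < m"
proof (induction d arbitrary: t)
  case (Suc d)
  have "m ^ d > 0"
    using Suc.prems by (cases "m = 0") auto
  then have "t mod m ^ d < m ^ d" and "t div m ^ d < m"
    using Suc.prems(1) by (simp_all add: less_mult_imp_div_less mult.commute)
  then show ?case
    using Suc by (auto simp: gray.simps(2) Let_def)
qed simp

lemma inj_on_gray: "inj_on (gray m d) {..<m ^ d}"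
proof (induction d)
  case (Suc d)
  show ?case
  proof (rule inj_onI)
    fix t t' assume "t \<in> {..<m ^ Suc d}" "t' \<in> {..<m ^ Suc d}" and eq: "gray m (Suc d) t = gray m (Suc d) t'"
    have "m ^ d > 0"
      using \<open>t \<in> {..<m ^ Suc d}\<close> by (cases "m = 0") auto
    define q s q' s' where q_def: "q = t div m ^ d" and s_def: "s = t mod m ^ d"
      and q'_def: "q' = t' div m ^ d" and s'_def: "s' = t' mod m ^ d"
    have s: "s < m ^ d" "s' < m ^ d"
      using \<open>m ^ d > 0\<close> by (simp_all add: s_def s'_def)
    define u u' where u_def: "u = (if even q then s else m ^ d - 1 - s)"
      and u'_def: "u' = (if even q' then s' else m ^ d - 1 - s')"
    have u: "u < m ^ d" "u' < m ^ d"
      using s \<open>m ^ d > 0\<close> by (auto simp: u_def u'_def)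
    have t: "t = q * m ^ d + s" "t' = q' * m ^ d + s'"
      unfolding q_def s_def q'_def s'_def by (metis div_mult_mod_eq)+
    have eq': "(gray m d u)(d := q) = (gray m d u')(d := q')"
      using eq unfolding t gray_Suc_eq[OF s(1)] gray_Suc_eq[OF s(2)] u_def u'_def .
    then have "q = q'"
      by (metis fun_upd_same)
    moreover have "gray m d u = gray m d u'"
    proof
      fix k
      show "gray m d u k = gray m d u' k"
        using eq' gray_beyond[of d k m] by (cases "k = d") (auto dest: fun_cong[where x = k])
    qed
    then have "u = u'"
      using Suc.IH u by (auto dest: inj_onD)
    ultimately have "s = s'"
      using s unfolding u_def u'_def by (auto split: if_splits)
    with \<open>q = q'\<close> show "t = t'"
      using t by simp
  qed
qed (simp add: inj_on_def)

text \<open>The lower coordinates at the moment coordinate j moves from c to \<open>c + 1\<close>: the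
  last point of a forward (c even) or backward (c odd) run of the lower snake.\<close>

definition gray_corner :: "nat \<Rightarrow> nat \<Rightarrow> nat \<Rightarrow> nat \<Rightarrow> nat" where
  "gray_corner m j c = (if even c then gray m j (m ^ j - 1) else gray m j 0)"

definition gray_move :: "nat \<Rightarrow> nat \<Rightarrow> nat \<Rightarrow> (nat \<Rightarrow> nat) \<Rightarrow> (nat \<Rightarrow> nat) \<Rightarrow> bool" where
  "gray_move m j c x y \<longleftrightarrow> Suc c < m \<and> {x j, y j} = {c, Suc c} \<and> (\<forall>k. k \<noteq> j \<longrightarrow> x k = y k)
     \<and> (\<forall>k<j. x k = gray_corner m j c k)"

lemma gray_move_sym: "gray_move m j c x y \<Longrightarrow> gray_move m j c y x"
  unfolding gray_move_def by (metis insert_commute less_not_refl)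

lemma gray_move_pair:
  "gray_move m j c x y \<Longrightarrow> {x', y'} = {x, y} \<Longrightarrow> gray_move m j c x' y'"
  by (metis doubleton_eq_iff gray_move_sym)

lemma gray_move_upd: "gray_move m j c x y \<Longrightarrow> j < d \<Longrightarrow> gray_move m j c (x(d := q)) (y(d := q))"
  unfolding gray_move_def by auto

lemma gray_move_coord_low:
  assumes "gray_move m j c x y"
  shows "(LEAST k. x k \<noteq> y k) = j" and "min (x j) (y j) = c"
proof -
  have xy: "{x j, y j} = {c, Suc c}" and agree: "\<forall>k. k \<noteq> j \<longrightarrow> x k = y k"
    using assms unfolding gray_move_def by auto
  then have "x j \<noteq> y j"
    by (metis doubleton_eq_iff n_not_Suc_n)
  with agree show "(LEAST k. x k \<noteq> y k) = j"
    by (intro Least_equality) auto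
  show "min (x j) (y j) = c"
    using xy by (auto simp: doubleton_eq_iff)
qed

lemma gray_move_pair_eq: "gray_move m j c x y \<Longrightarrow> {x, y} = {x(j := c), x(j := Suc c)}"
  unfolding gray_move_def by (auto simp: doubleton_eq_iff fun_eq_iff)

lemma gray_carry:
  assumes "Suc q < m"
  shows "gray m (Suc d) (q * m ^ d + (m ^ d - 1)) = (gray_corner m d q)(d := q)"
    and "gray m (Suc d) (Suc (q * m ^ d + (m ^ d - 1))) = (gray_corner m d q)(d := Suc q)"
proof -
  have "m ^ d > 0"
    using assms by simp
  then show "gray m (Suc d) (q * m ^ d + (m ^ d - 1)) = (gray_corner m d q)(d := q)"
    using gray_Suc_eq[of "m ^ d - 1" m d q] by (simp add: gray_corner_def)
  have "Suc (q * m ^ d + (m ^ d - 1)) = Suc q * m ^ d + 0"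
    using \<open>m ^ d > 0\<close> by simp
  then show "gray m (Suc d) (Suc (q * m ^ d + (m ^ d - 1))) = (gray_corner m d q)(d := Suc q)"
    by (simp only: gray_Suc_eq[OF \<open>m ^ d > 0\<close>]) (simp add: gray_corner_def)
qed

lemma gray_move_carry:
  "Suc q < m \<Longrightarrow> gray_move m d q ((gray_corner m d q)(d := q)) ((gray_corner m d q)(d := Suc q))"
  unfolding gray_move_def by auto

lemma gray_block_pair:
  fixes m d q s :: nat
  assumes "Suc s < m ^ d"
  defines "u \<equiv> if even q then s else m ^ d - 2 - s"
  shows "{gray m (Suc d) (q * m ^ d + s), gray m (Suc d) (q * m ^ d + Suc s)}
    = {(gray m d u)(d := q), (gray m d (Suc u))(d := q)}"
proof (cases "even q")
  case False
  have "m ^ d - 1 - s = Suc u" and "m ^ d - 1 - Suc s = u"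
    using assms False by auto
  then show ?thesis
    using gray_Suc_eq[of s m d q] gray_Suc_eq[of "Suc s" m d q] assms False by auto
qed (use gray_Suc_eq[of s m d q] gray_Suc_eq[of "Suc s" m d q] assms in auto)

lemma gray_Suc_move:
  "Suc t < m ^ d \<Longrightarrow> \<exists>j<d. \<exists>c. gray_move m j c (gray m d t) (gray m d (Suc t))"
proof (induction d arbitrary: t)
  case (Suc d)
  have "m ^ d > 0"
    using Suc.prems by (cases "m = 0") auto
  define q s where q_def: "q = t div m ^ d" and s_def: "s = t mod m ^ d"
  have t: "t = q * m ^ d + s"
    unfolding q_def s_def by (metis div_mult_mod_eq)
  show ?case
  proof (cases "Suc s < m ^ d")
    case True
    define u where "u = (if even q then s else m ^ d - 2 - s)"
    have "Suc u < m ^ d"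
      using True by (auto simp: u_def)
    then obtain j c where "j < d" "gray_move m j c (gray m d u) (gray m d (Suc u))"
      using Suc.IH by blast
    then have "gray_move m j c ((gray m d u)(d := q)) ((gray m d (Suc u))(d := q))"
      by (simp add: gray_move_upd)
    moreover have "{gray m (Suc d) t, gray m (Suc d) (Suc t)}
        = {(gray m d u)(d := q), (gray m d (Suc u))(d := q)}"
      using gray_block_pair[OF True, of q] unfolding t u_def by simp
    ultimately have "gray_move m j c (gray m (Suc d) t) (gray m (Suc d) (Suc t))"
      by (rule gray_move_pair)
    with \<open>j < d\<close> show ?thesis
      using less_SucI by blast
  next
    case False
    moreover have "s < m ^ d"
      using \<open>m ^ d > 0\<close> by (simp add: s_def)
    ultimately have s: "s = m ^ d - 1"
      by simp
    then have Suc_t: "Suc t = Suc q * m ^ d"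
      using \<open>m ^ d > 0\<close> t by simp
    have "Suc q * m ^ d < m * m ^ d"
      using Suc.prems Suc_t by simp
    then have "Suc q < m"
      using mult_less_cancel2 by blast
    then have "gray_move m d q (gray m (Suc d) t) (gray m (Suc d) (Suc t))"
      unfolding t s gray_carry[OF \<open>Suc q < m\<close>] by (rule gray_move_carry)
    then show ?thesis
      by blast
  qed
qed simp

lemma gray_block_lift:
  assumes "Suc u < m ^ d" "q < m"
  shows "\<exists>t. Suc t < m ^ Suc d \<and>
    {gray m (Suc d) t, gray m (Suc d) (Suc t)} = {(gray m d u)(d := q), (gray m d (Suc u))(d := q)}"
proof -
  define s where "s = (if even q then u else m ^ d - 2 - u)"
  have s: "Suc s < m ^ d" "u = (if even q then s else m ^ d - 2 - s)"
    using assms(1) by (auto simp: s_def)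
  have "Suc q * m ^ d \<le> m * m ^ d"
    using assms(2) mult_le_mono1[of "Suc q" m "m ^ d"] by simp
  then have "Suc (q * m ^ d + s) < m ^ Suc d"
    using s(1) by simp
  moreover have "{gray m (Suc d) (q * m ^ d + s), gray m (Suc d) (Suc (q * m ^ d + s))}
      = {(gray m d u)(d := q), (gray m d (Suc u))(d := q)}"
    using gray_block_pair[OF s(1), of q, folded s(2)] by simp
  ultimately show ?thesis
    by (intro exI[of _ "q * m ^ d + s"] conjI)
qed

lemma gray_move_occurs_carry:
  assumes "Suc c < m" "\<forall>k<Suc d. y k < m" "\<forall>k\<ge>Suc d. y k = 0" "y d = c"
    "\<forall>k<d. y k = gray_corner m d c k"
  shows "\<exists>t. Suc t < m ^ Suc d \<and> {gray m (Suc d) t, gray m (Suc d) (Suc t)} = {y, y(d := Suc c)}"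
proof -
  have "m ^ d > 0"
    using assms(1) by simp
  have corner_beyond: "gray_corner m d c k = 0" if "d \<le> k" for k
    using that gray_beyond by (simp add: gray_corner_def)
  have y: "y = (gray_corner m d c)(d := c)"
  proof
    fix k
    consider "k < d" | "k = d" | "d < k"
      by linarith
    then show "y k = ((gray_corner m d c)(d := c)) k"
      by cases (use assms corner_beyond in auto)
  qed
  define t where "t = c * m ^ d + (m ^ d - 1)"
  have "Suc t = Suc c * m ^ d"
    using \<open>m ^ d > 0\<close> by (simp add: t_def)
  also have "\<dots> < m * m ^ d"
    using mult_less_mono1[OF assms(1) \<open>m ^ d > 0\<close>] .
  finally have "Suc t < m ^ Suc d"
    by simp
  moreover have "gray m (Suc d) t = y" "gray m (Suc d) (Suc t) = y(d := Suc c)"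
    using gray_carry[OF assms(1), of d] y by (simp_all only: t_def fun_upd_upd)
  then have "{gray m (Suc d) t, gray m (Suc d) (Suc t)} = {y, y(d := Suc c)}"
    by (simp only:)
  ultimately show ?thesis
    by (intro exI[of _ t] conjI)
qed

lemma gray_move_occurs:
  assumes "j < d" "Suc c < m" "\<forall>k<d. y k < m" "\<forall>k\<ge>d. y k = 0" "y j = c"
    "\<forall>k<j. y k = gray_corner m j c k"
  shows "\<exists>t. Suc t < m ^ d \<and> {gray m d t, gray m d (Suc t)} = {y, y(j := Suc c)}"
  using assms
proof (induction d arbitrary: y)
  case (Suc d)
  show ?case
  proof (cases "j = d")
    case True
    show ?thesis
      unfolding True by (rule gray_move_occurs_carry) (use Suc.prems True in auto)
  next
    case False
    then have "j < d"
      using Suc.prems(1) by simp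
    define y' where "y' = y(d := 0)"
    have "\<exists>u. Suc u < m ^ d \<and> {gray m d u, gray m d (Suc u)} = {y', y'(j := Suc c)}"
      by (rule Suc.IH) (use Suc.prems \<open>j < d\<close> in \<open>auto simp: y'_def\<close>)
    then obtain u where u: "Suc u < m ^ d" "{gray m d u, gray m d (Suc u)} = {y', y'(j := Suc c)}"
      by blast
    have "y d < m"
      using Suc.prems(3) by simp
    from gray_block_lift[OF u(1) this] obtain t where t: "Suc t < m ^ Suc d"
      "{gray m (Suc d) t, gray m (Suc d) (Suc t)} = {(gray m d u)(d := y d), (gray m d (Suc u))(d := y d)}"
      by (elim exE conjE)
    note t(2)
    also have "{(gray m d u)(d := y d), (gray m d (Suc u))(d := y d)} = (\<lambda>x. x(d := y d)) ` {y', y'(j := Suc c)}"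
      unfolding u(2)[symmetric] by simp
    also have "\<dots> = {y, y(j := Suc c)}"
    proof -
      have "y(j := Suc c, d := y d) = y(j := Suc c)"
        using \<open>j < d\<close> by (simp add: fun_eq_iff)
      then show ?thesis
        by (simp add: y'_def)
    qed
    finally show ?thesis
      using t(1) by (intro exI[of _ t] conjI)
  qed
qed simp

section \<open>Transversals of the grid\<close>

text \<open>Vertex v of part k is \<open>vert k v\<close> (\<open>k < r\<close>, \<open>v < 2m\<close>); \<open>v < m\<close> are the main
  vertices, and \<open>m + c\<close> is the auxiliary vertex used when a coordinate moves from c to
  \<open>c + 1\<close>.\<close>

locale snake_grid =
  fixes m r :: nat
  assumes two_le_m: "2 \<le> m" and r_pos: "0 < r"
begin

definition vert :: "nat \<Rightarrow> nat \<Rightarrow> nat" where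
  "vert k v = 2 * m * k + v"

definition transversal :: "(nat \<Rightarrow> nat) \<Rightarrow> nat set" where
  "transversal y = (\<lambda>k. vert k (y k)) ` {..<r}"

definition in_grid :: "(nat \<Rightarrow> nat) \<Rightarrow> bool" where
  "in_grid y \<longleftrightarrow> (\<forall>k<r. y k < 2 * m) \<and> (\<forall>k\<ge>r. y k = 0)"

definition move_end :: "nat \<Rightarrow> nat \<Rightarrow> (nat \<Rightarrow> nat) \<Rightarrow> bool" where
  "move_end j c y \<longleftrightarrow> j < r \<and> Suc c < m \<and> (\<forall>k<r. y k < m) \<and> (\<forall>k\<ge>r. y k = 0)
     \<and> (y j = c \<or> y j = Suc c) \<and> (\<forall>k<j. y k = gray_corner m j c k)"

definition step_set :: "nat set \<Rightarrow> bool" where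
  "step_set T \<longleftrightarrow> (\<exists>j c y. move_end j c y \<and> T = insert (vert j (m + c)) (transversal y))"

definition live :: "nat set \<Rightarrow> bool" where
  "live f \<longleftrightarrow> (\<exists>T. step_set T \<and> f \<subseteq> T)"

lemma vert_eq_iff:
  assumes "v < 2 * m" "v' < 2 * m"
  shows "vert k v = vert k' v' \<longleftrightarrow> k = k' \<and> v = v'"
proof
  assume "vert k v = vert k' v'"
  then have "vert k v div (2 * m) = vert k' v' div (2 * m)" "vert k v mod (2 * m) = vert k' v' mod (2 * m)"
    by simp_all
  then show "k = k' \<and> v = v'"
    using assms by (simp add: vert_def)
qed simp

lemma vert_main_ne_aux: "v < m \<Longrightarrow> c < m \<Longrightarrow> vert k v \<noteq> vert j (m + c)"
  using vert_eq_iff[of v "m + c" k j] by simp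

lemma vert_lessThan: "k < r \<Longrightarrow> v < 2 * m \<Longrightarrow> vert k v < 2 * m * r"
proof -
  assume "k < r" "v < 2 * m"
  then have "2 * m * Suc k \<le> 2 * m * r"
    by (intro mult_left_mono) auto
  with \<open>v < 2 * m\<close> show ?thesis
    by (simp add: vert_def)
qed

lemma move_end_in_grid: "move_end j c y \<Longrightarrow> in_grid y"
  unfolding move_end_def in_grid_def by auto

lemma move_end_aux_in_grid: "move_end j c y \<Longrightarrow> in_grid (y(j := m + c))"
  unfolding move_end_def in_grid_def by auto

lemma move_end_upd: "move_end j c y \<Longrightarrow> move_end j c y' \<Longrightarrow> k < r \<Longrightarrow> move_end j c (y(k := y' k))"
  unfolding move_end_def by auto

lemma finite_transversal: "finite (transversal y)"
  unfolding transversal_def by simp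

lemma vert_in_transversal: "k < r \<Longrightarrow> vert k (y k) \<in> transversal y"
  unfolding transversal_def by auto

lemma transversal_memE:
  assumes "x \<in> transversal y"
  obtains k where "k < r" "x = vert k (y k)"
  using assms unfolding transversal_def by auto

lemma mem_transversal_iff:
  "in_grid y \<Longrightarrow> v < 2 * m \<Longrightarrow> vert k v \<in> transversal y \<longleftrightarrow> k < r \<and> y k = v"
  unfolding transversal_def in_grid_def using vert_eq_iff by auto

lemma card_transversal: "in_grid y \<Longrightarrow> card (transversal y) = r"
  unfolding transversal_def in_grid_def
  by (subst card_image) (auto simp: inj_on_def vert_eq_iff)

lemma aux_notin_transversal:
  assumes "move_end j' c' y" "c < m"
  shows "vert j (m + c) \<notin> transversal y"
proof
  assume "vert j (m + c) \<in> transversal y"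
  then obtain k where "k < r" "vert j (m + c) = vert k (y k)"
    by (rule transversal_memE)
  moreover have "y k < m"
    using assms(1) \<open>k < r\<close> by (simp add: move_end_def)
  ultimately show False
    using vert_main_ne_aux[OF _ assms(2), of "y k" k j] by simp
qed

lemma transversal_inject: "in_grid x \<Longrightarrow> in_grid y \<Longrightarrow> transversal x = transversal y \<Longrightarrow> x = y"
proof
  fix k
  assume x: "in_grid x" and y: "in_grid y" and eq: "transversal x = transversal y"
  show "x k = y k"
  proof (cases "k < r")
    case True
    then have "vert k (x k) \<in> transversal y"
      using eq vert_in_transversal by blast
    then show ?thesis
      using mem_transversal_iff[OF y] x True unfolding in_grid_def by auto
  qed (use x y in \<open>simp add: in_grid_def\<close>)
qed

lemma transversal_Un_upd: "j < r \<Longrightarrow> transversal y \<union> transversal (y(j := v)) = insert (vert j v) (transversal y)"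
  unfolding transversal_def by auto

lemma transversal_upd:
  assumes "in_grid y" "k < r" "v < 2 * m"
  shows "transversal (y(k := v)) = insert (vert k v) (transversal y - {vert k (y k)})"
proof -
  have "{..<r} = insert k ({..<r} - {k})"
    using assms(2) by auto
  then have "transversal (y(k := v)) = insert (vert k v) ((\<lambda>i. vert i ((y(k := v)) i)) ` ({..<r} - {k}))"
    unfolding transversal_def by (metis image_insert fun_upd_same)
  also have "(\<lambda>i. vert i ((y(k := v)) i)) ` ({..<r} - {k}) = (\<lambda>i. vert i (y i)) ` ({..<r} - {k})"
    by (rule image_cong) auto
  also have "(\<lambda>i. vert i (y i)) ` ({..<r} - {k}) = transversal y - {vert k (y k)}"
  proof -
    have "vert i (y i) \<noteq> vert k (y k)" if "i < r" "i \<noteq> k" for i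
      using that assms vert_eq_iff unfolding in_grid_def by simp
    then show ?thesis
      unfolding transversal_def by auto
  qed
  finally show ?thesis .
qed

lemma in_grid_eq_if_transversal_subset:
  assumes x: "in_grid x" and z: "in_grid z" and w: "in_grid w"
    and agree: "\<forall>k. k \<noteq> j \<longrightarrow> x k = z k" and sub: "transversal w \<subseteq> transversal x \<union> transversal z"
  shows "w = x \<or> w = z"
proof -
  have coord: "w k = x k \<or> w k = z k" for k
  proof (cases "k < r")
    case True
    then have "vert k (w k) \<in> transversal x \<union> transversal z"
      using sub vert_in_transversal by blast
    then show ?thesis
      using mem_transversal_iff[OF x] mem_transversal_iff[OF z] w True unfolding in_grid_def by auto
  qed (use w x in \<open>simp add: in_grid_def\<close>)
  show ?thesis
  proof (cases "w j = x j")
    case True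
    then have "w = x"
      using coord agree by (metis ext)
    then show ?thesis ..
  next
    case False
    then have "w = z"
      using coord agree by (metis ext)
    then show ?thesis ..
  qed
qed

lemma card_step_set:
  assumes "step_set T"
  shows "card T = Suc r"
proof -
  obtain j c y where y: "move_end j c y" and T: "T = insert (vert j (m + c)) (transversal y)"
    using assms unfolding step_set_def by blast
  moreover have "c < m"
    using y by (simp add: move_end_def)
  ultimately show ?thesis
    using aux_notin_transversal finite_transversal card_transversal[OF move_end_in_grid[OF y]] by simp
qed

lemma step_set_subset_lessThan: "step_set T \<Longrightarrow> T \<subseteq> {..<2 * m * r}"
  unfolding step_set_def move_end_def
  by (auto simp: vert_lessThan elim!: transversal_memE)

subsection \<open>Three live facets force a step\<close>

lemma no_three_transversal_facets:
  assumes p: "p1 \<in> S" "p2 \<in> S" "p3 \<in> S" "p1 \<noteq> p2" "p1 \<noteq> p3" "p2 \<noteq> p3"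
    and y: "in_grid y1" "in_grid y2" "in_grid y3"
    and facets: "S - {p1} = transversal y1" "S - {p2} = transversal y2" "S - {p3} = transversal y3"
  shows False
proof -
  have "p1 \<in> transversal y2" "p1 \<notin> transversal y1"
    using p facets by blast+
  then obtain i1 where i1: "i1 < r" "p1 = vert i1 (y2 i1)" "y1 i1 \<noteq> y2 i1"
    by (metis transversal_memE vert_in_transversal)
  have "p2 \<in> transversal y1" "p2 \<notin> transversal y2"
    using p facets by blast+
  then obtain i2 where i2: "i2 < r" "p2 = vert i2 (y1 i2)" "y1 i2 \<noteq> y2 i2"
    by (metis transversal_memE vert_in_transversal)
  have less: "y1 i1 < 2 * m" "y2 i1 < 2 * m" "y1 i2 < 2 * m" "y2 i2 < 2 * m"
    using y i1 i2 unfolding in_grid_def by auto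
  have "p1 \<in> transversal y3" "p2 \<in> transversal y3"
    using p facets by blast+
  then have "y3 i1 = y2 i1" "y3 i2 = y1 i2"
    using mem_transversal_iff[OF y(3)] less i1 i2 by auto
  then have "vert i1 (y1 i1) \<notin> transversal y3" "vert i2 (y2 i2) \<notin> transversal y3"
    using mem_transversal_iff[OF y(3)] less i1(3) i2(3) by auto
  moreover have "vert i1 (y1 i1) \<in> S" "vert i2 (y2 i2) \<in> S"
    using facets(1,2) i1(1) i2(1) vert_in_transversal by blast+
  ultimately have "vert i1 (y1 i1) = p3" "vert i2 (y2 i2) = p3"
    using facets(3) by blast+
  then have "vert i1 (y1 i1) = vert i2 (y2 i2)"
    by simp
  then have "i1 = i2" "y1 i1 = y2 i2"
    using vert_eq_iff[OF less(1) less(4)] by blast+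
  with i1(3) show False
    by simp
qed

lemma subset_step_set_eq: "step_set T \<Longrightarrow> card S = Suc r \<Longrightarrow> S \<subseteq> T \<Longrightarrow> S = T"
  using card_step_set card_ge_0_finite card_subset_eq by (metis zero_less_Suc)

lemma live_main_vert_unique:
  assumes "live f" "vert k v \<in> f" "vert k v' \<in> f" "v < m" "v' < m"
  shows "v = v'"
proof -
  obtain j c y where y: "move_end j c y" and sub: "f \<subseteq> insert (vert j (m + c)) (transversal y)"
    using assms(1) unfolding live_def step_set_def by blast
  have "c < m"
    using y by (simp add: move_end_def)
  then have "vert k v \<in> transversal y" "vert k v' \<in> transversal y"
    using sub assms(2-5) vert_main_ne_aux by blast+
  then show ?thesis
    using mem_transversal_iff[OF move_end_in_grid[OF y]] assms(4,5) by simp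
qed

lemma insert_transversal_upd_eq:
  assumes S: "card S = Suc r" and y: "in_grid y" and k: "k < r" "v < m"
    and w: "w \<in> S" and p: "p \<in> S" "p \<noteq> w" "p = vert k v" and q: "vert k (y k) \<notin> S"
    and sub: "S - {p} \<subseteq> insert w (transversal y)"
  shows "S = insert w (transversal (y(k := v)))"
proof -
  define q where "q = vert k (y k)"
  have "q \<in> transversal y"
    unfolding q_def using k(1) by (rule vert_in_transversal)
  have "S - {w} - {p} \<subseteq> transversal y - {q}"
    using sub q unfolding q_def by auto
  moreover have "card (S - {w} - {p}) = card (transversal y - {q})"
    using S p(1,2) w \<open>q \<in> transversal y\<close> card_transversal[OF y] finite_transversal by simp
  ultimately have facet_eq: "S - {w} - {p} = transversal y - {q}"
    using finite_transversal by (intro card_subset_eq) auto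
  have "transversal (y(k := v)) = insert p (transversal y - {q})"
    using transversal_upd[OF y k(1)] k(2) p(3) unfolding q_def by simp
  also have "\<dots> = S - {w}"
    using facet_eq p(1,2) by auto
  finally show ?thesis
    using w by auto
qed

lemma step_set_if_facets_share_aux:
  assumes S: "card S = Suc r"
    and p: "pb \<in> S" "pc \<in> S" "px \<in> S" "pb \<noteq> pc" "pb \<noteq> px" "pc \<noteq> px"
    and w: "w = vert j (m + c)" "w \<in> S" "w \<noteq> pb" "w \<noteq> pc"
    and yb: "move_end j c yb" and yc: "move_end j c yc"
    and sub_b: "S - {pb} \<subseteq> insert w (transversal yb)"
    and sub_c: "S - {pc} \<subseteq> insert w (transversal yc)"
    and live_x: "live (S - {px})"
  shows "step_set S"
proof -
  have step_b: "step_set (insert w (transversal yb))" and step_c: "step_set (insert w (transversal yc))"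
    using yb yc w(1) unfolding step_set_def by blast+
  consider "pb \<in> insert w (transversal yb)" | "pc \<in> insert w (transversal yc)"
    | "pb \<notin> insert w (transversal yb)" "pc \<notin> insert w (transversal yc)"
    by blast
  then show ?thesis
  proof cases
    case 1
    then show ?thesis
      using subset_step_set_eq[OF step_b S] sub_b step_b by blast
  next
    case 2
    then show ?thesis
      using subset_step_set_eq[OF step_c S] sub_c step_c by blast
  next
    case 3
    have "pb \<in> transversal yc"
      using sub_c p(1,4) w(3) by blast
    then obtain k where k: "k < r" "pb = vert k (yc k)"
      by (rule transversal_memE)
    have "c < m" "yb k < m" "yc k < m"
      using yb yc k(1) by (auto simp: move_end_def)
    have "yb k \<noteq> yc k"
      using 3 k vert_in_transversal[OF k(1), of yb] by auto
    define q where "q = vert k (yb k)"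
    have "q \<notin> S"
    proof
      assume "q \<in> S"
      have "q \<noteq> w"
        using vert_main_ne_aux[OF \<open>yb k < m\<close> \<open>c < m\<close>] w(1) unfolding q_def by simp
      moreover have "q \<notin> transversal yc"
        using mem_transversal_iff[OF move_end_in_grid[OF yc]] \<open>yb k < m\<close> \<open>yb k \<noteq> yc k\<close>
        unfolding q_def by simp
      ultimately have "q = pc"
        using sub_c \<open>q \<in> S\<close> by blast
      then have "vert k (yb k) \<in> S - {px}" "vert k (yc k) \<in> S - {px}"
        using p k(2) unfolding q_def by blast+
      with \<open>yb k \<noteq> yc k\<close> show False
        using live_main_vert_unique[OF live_x] \<open>yb k < m\<close> \<open>yc k < m\<close> by blast
    qed
    have "S = insert w (transversal (yb(k := yc k)))"
      by (rule insert_transversal_upd_eq[OF S move_end_in_grid[OF yb] k(1) \<open>yc k < m\<close> w(2) p(1) w(3)[symmetric]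
            k(2) \<open>q \<notin> S\<close>[unfolded q_def] sub_b])
    moreover have "move_end j c (yb(k := yc k))"
      using yb yc k(1) by (rule move_end_upd)
    ultimately show ?thesis
      using w(1) unfolding step_set_def by blast
  qed
qed

lemma step_set_if_facet_contains_aux:
  assumes S: "card S = Suc r"
    and p: "p \<in> S" "q1 \<in> S" "q2 \<in> S" "p \<noteq> q1" "p \<noteq> q2" "q1 \<noteq> q2"
    and y: "move_end j c y" and sub: "S - {p} \<subseteq> insert (vert j (m + c)) (transversal y)"
    and aux: "vert j (m + c) \<in> S - {p}"
    and live: "live (S - {q1})" "live (S - {q2})"
  shows "step_set S"
proof -
  define w where "w = vert j (m + c)"
  have "c < m"
    using y by (simp add: move_end_def)
  have same_move: "\<exists>y'. move_end j c y' \<and> S - {q} \<subseteq> insert w (transversal y')"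
    if live_q: "live (S - {q})" and w_q: "w \<in> S - {q}" for q
  proof -
    obtain j' c' y' where y': "move_end j' c' y'"
      and sub': "S - {q} \<subseteq> insert (vert j' (m + c')) (transversal y')"
      using live_q unfolding live_def step_set_def by blast
    have "c' < m"
      using y' by (simp add: move_end_def)
    have "w \<notin> transversal y'"
      unfolding w_def using y' \<open>c < m\<close> by (rule aux_notin_transversal)
    then have "vert j (m + c) = vert j' (m + c')"
      using sub' w_q unfolding w_def by blast
    then have "j' = j" "c' = c"
      using vert_eq_iff \<open>c < m\<close> \<open>c' < m\<close> by simp_all
    then show ?thesis
      using y' sub' unfolding w_def by blast
  qed
  have w: "w \<in> S" "w \<noteq> p"
    using aux unfolding w_def by blast+
  have sub_w: "S - {p} \<subseteq> insert w (transversal y)"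
    using sub unfolding w_def .
  show ?thesis
  proof (cases "w = q1")
    case True
    then have "w \<in> S - {q2}" "w \<noteq> q2"
      using w p(6) by blast+
    then obtain yc where yc: "move_end j c yc" "S - {q2} \<subseteq> insert w (transversal yc)"
      using same_move[OF live(2)] by blast
    show ?thesis
      by (rule step_set_if_facets_share_aux[OF S p(1,3,2) p(5,4) p(6)[symmetric] w_def w
            \<open>w \<noteq> q2\<close> y yc(1) sub_w yc(2) live(1)])
  next
    case False
    then have "w \<in> S - {q1}"
      using w by blast
    then obtain yc where yc: "move_end j c yc" "S - {q1} \<subseteq> insert w (transversal yc)"
      using same_move[OF live(1)] by blast
    show ?thesis
      by (rule step_set_if_facets_share_aux[OF S p(1,2,3) p(4,5,6) w_def w False y yc(1) sub_w yc(2)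
            live(2)])
  qed
qed

lemma live_facet_cases:
  assumes S: "card S = Suc r" and "p \<in> S" and "live (S - {p})"
  obtains j c y where "move_end j c y" "S - {p} \<subseteq> insert (vert j (m + c)) (transversal y)"
      "vert j (m + c) \<in> S - {p}"
    | y where "in_grid y" "S - {p} = transversal y"
proof -
  obtain j c y where y: "move_end j c y" and sub: "S - {p} \<subseteq> insert (vert j (m + c)) (transversal y)"
    using assms(3) unfolding live_def step_set_def by blast
  show ?thesis
  proof (cases "vert j (m + c) \<in> S - {p}")
    case False
    then have "S - {p} \<subseteq> transversal y"
      using sub by blast
    moreover have "card (S - {p}) = card (transversal y)"
      using S \<open>p \<in> S\<close> card_transversal[OF move_end_in_grid[OF y]] by simp
    ultimately have "S - {p} = transversal y"
      using finite_transversal by (intro card_subset_eq) auto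
    then show ?thesis
      using that(2) move_end_in_grid[OF y] by blast
  qed (use that(1) y sub in blast)
qed

lemma step_set_if_three_live_facets:
  assumes S: "card S = Suc r"
    and p: "p1 \<in> S" "p2 \<in> S" "p3 \<in> S" "p1 \<noteq> p2" "p1 \<noteq> p3" "p2 \<noteq> p3"
    and live: "live (S - {p1})" "live (S - {p2})" "live (S - {p3})"
  shows "step_set S"
proof (rule ccontr)
  assume no_step: "\<not> step_set S"
  obtain y1 where y1: "in_grid y1" "S - {p1} = transversal y1"
    by (rule live_facet_cases[OF S p(1) live(1)])
      (use no_step step_set_if_facet_contains_aux[OF S p(1,2,3) p(4,5,6) _ _ _ live(2,3)] in blast)
  obtain y2 where y2: "in_grid y2" "S - {p2} = transversal y2"
    by (rule live_facet_cases[OF S p(2) live(2)])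
      (use no_step step_set_if_facet_contains_aux[OF S p(2,1,3) p(4)[symmetric] p(6,5) _ _ _ live(1,3)] in blast)
  obtain y3 where y3: "in_grid y3" "S - {p3} = transversal y3"
    by (rule live_facet_cases[OF S p(3) live(3)])
      (use no_step step_set_if_facet_contains_aux[OF S p(3,1,2) p(5,6)[symmetric] p(4) _ _ _ live(1,2)] in blast)
  show False
    using no_three_transversal_facets[OF p y1(1) y2(1) y3(1) y1(2) y2(2) y3(2)] .
qed

subsection \<open>The path of r-sets\<close>

definition path_length :: nat where
  "path_length = 2 * (m ^ r - 1)"

definition move_coord :: "nat \<Rightarrow> nat" where
  "move_coord t = (LEAST k. gray m r t k \<noteq> gray m r (Suc t) k)"

definition move_low :: "nat \<Rightarrow> nat" where
  "move_low t = min (gray m r t (move_coord t)) (gray m r (Suc t) (move_coord t))"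

definition path :: "nat \<Rightarrow> nat \<Rightarrow> nat" where
  "path i = (if even i then gray m r (i div 2)
     else (gray m r (i div 2))(move_coord (i div 2) := m + move_low (i div 2)))"

definition path_step :: "nat \<Rightarrow> nat set" where
  "path_step i = transversal (path i) \<union> transversal (path (Suc i))"

lemma path_index_bound: "i \<le> path_length \<Longrightarrow> i div 2 < m ^ r"
proof -
  assume "i \<le> path_length"
  then have "i div 2 \<le> m ^ r - 1"
    using div_le_mono[of i path_length 2] by (simp add: path_length_def)
  moreover have "0 < m ^ r"
    using two_le_m by simp
  ultimately show ?thesis
    by linarith
qed

lemma path_index_odd: "odd i \<Longrightarrow> i \<le> path_length \<Longrightarrow> i < path_length"
  unfolding path_length_def by (metis dvd_triv_left le_neq_implies_less)

lemma path_index_bound_Suc: "i < path_length \<Longrightarrow> Suc (i div 2) < m ^ r"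
  using two_le_m by (simp add: path_length_def)

lemma path_length_pos: "0 < path_length"
proof -
  have "m ^ 1 \<le> m ^ r"
    using two_le_m r_pos by (intro power_increasing) auto
  then show ?thesis
    using two_le_m by (simp add: path_length_def)
qed

lemma gray_move_at:
  assumes "Suc t < m ^ r"
  shows "move_coord t < r" and "gray_move m (move_coord t) (move_low t) (gray m r t) (gray m r (Suc t))"
proof -
  obtain j c where "j < r" "gray_move m j c (gray m r t) (gray m r (Suc t))"
    using gray_Suc_move[OF assms] by blast
  moreover from this(2) have "move_coord t = j" "move_low t = c"
    unfolding move_coord_def move_low_def using gray_move_coord_low by simp_all
  ultimately show "move_coord t < r" "gray_move m (move_coord t) (move_low t) (gray m r t) (gray m r (Suc t))"
    by simp_all
qed

lemma move_end_gray:
  assumes "Suc t < m ^ r"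
  shows "move_end (move_coord t) (move_low t) (gray m r t)"
    and "move_end (move_coord t) (move_low t) (gray m r (Suc t))"
proof -
  have move: "gray_move m (move_coord t) (move_low t) (gray m r t) (gray m r (Suc t))"
    using gray_move_at[OF assms] by simp
  have "{gray m r t (move_coord t), gray m r (Suc t) (move_coord t)} = {move_low t, Suc (move_low t)}"
    using move unfolding gray_move_def by simp
  then have "gray m r t (move_coord t) \<in> {move_low t, Suc (move_low t)}"
    "gray m r (Suc t) (move_coord t) \<in> {move_low t, Suc (move_low t)}"
    by blast+
  then show "move_end (move_coord t) (move_low t) (gray m r t)"
    "move_end (move_coord t) (move_low t) (gray m r (Suc t))"
    using move gray_move_at(1)[OF assms] gray_less[of _ m r] gray_beyond[of r _ m] assms
    unfolding gray_move_def move_end_def by auto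
qed

lemma path_in_grid: "i \<le> path_length \<Longrightarrow> in_grid (path i)"
proof (cases "even i")
  case True
  assume "i \<le> path_length"
  have "gray m r (i div 2) k < 2 * m" if "k < r" for k
    using gray_less[OF path_index_bound[OF \<open>i \<le> path_length\<close>] that] by simp
  then show ?thesis
    using True gray_beyond unfolding in_grid_def path_def by simp
next
  case False
  assume "i \<le> path_length"
  then have "i < path_length"
    using False path_index_odd by simp
  then show ?thesis
    using False move_end_aux_in_grid[OF move_end_gray(1)[OF path_index_bound_Suc]]
    unfolding path_def by simp
qed

lemma path_step_eq:
  assumes "i < path_length"
  obtains j c y where "move_end j c y" "{path i, path (Suc i)} = {y, y(j := m + c)}"
proof -
  define t where "t = i div 2"
  have t: "Suc t < m ^ r"
    using path_index_bound_Suc[OF assms] by (simp add: t_def)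
  define j c where "j = move_coord t" and "c = move_low t"
  show ?thesis
  proof (cases "even i")
    case True
    then have "path i = gray m r t" "path (Suc i) = (gray m r t)(j := m + c)"
      by (simp_all add: path_def t_def j_def c_def)
    then show ?thesis
      using that move_end_gray(1)[OF t] unfolding j_def c_def by auto
  next
    case False
    then have "Suc i div 2 = Suc t"
      unfolding t_def by presburger
    then have "path i = (gray m r t)(j := m + c)" "path (Suc i) = gray m r (Suc t)"
      using False by (simp_all add: path_def t_def j_def c_def)
    moreover have "(gray m r t)(j := m + c) = (gray m r (Suc t))(j := m + c)"
      using gray_move_at(2)[OF t] unfolding gray_move_def j_def c_def by (auto simp: fun_eq_iff)
    ultimately show ?thesis
      using that move_end_gray(2)[OF t] unfolding j_def c_def by (metis insert_commute)
  qed
qed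

lemma path_step_eq_insert:
  assumes "i < path_length" "move_end j c y" "{path i, path (Suc i)} = {y, y(j := m + c)}"
  shows "path_step i = insert (vert j (m + c)) (transversal y)"
proof -
  have "j < r"
    using assms(2) by (simp add: move_end_def)
  have "path_step i = transversal y \<union> transversal (y(j := m + c))"
    using assms(3) unfolding path_step_def by (auto simp: doubleton_eq_iff)
  then show ?thesis
    using transversal_Un_upd[OF \<open>j < r\<close>] by simp
qed

lemma step_set_path_step: "i < path_length \<Longrightarrow> step_set (path_step i)"
  by (metis path_step_eq path_step_eq_insert step_set_def)

lemma path_even_less: "even l \<Longrightarrow> l \<le> path_length \<Longrightarrow> k < r \<Longrightarrow> path l k < m"
  using gray_less path_index_bound by (simp add: path_def)

lemma path_odd_aux:
  assumes "odd l" "l \<le> path_length"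
  shows "move_coord (l div 2) < r" and "path l (move_coord (l div 2)) = m + move_low (l div 2)"
proof -
  have "l < path_length"
    using assms path_index_odd by simp
  then show "move_coord (l div 2) < r" "path l (move_coord (l div 2)) = m + move_low (l div 2)"
    using assms gray_move_at(1)[OF path_index_bound_Suc] by (simp_all add: path_def)
qed

lemma path_odd_inject:
  assumes i: "odd i" "odd i'" "i \<le> path_length" "i' \<le> path_length" and eq: "path i = path i'"
  shows "i = i'"
proof -
  define t t' where "t = i div 2" and "t' = i' div 2"
  have t: "Suc t < m ^ r" "Suc t' < m ^ r"
    using i path_index_odd path_index_bound_Suc unfolding t_def t'_def by simp_all
  have "move_coord t = move_coord t'"
  proof (rule ccontr)
    assume "move_coord t \<noteq> move_coord t'"
    then have "path i' (move_coord t) < m"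
      using i gray_less[OF less_trans[OF lessI t(2)]] path_odd_aux(1)[of i]
      by (simp add: path_def t_def t'_def)
    then show False
      using path_odd_aux(2)[of i] i eq unfolding t_def by simp
  qed
  moreover have "move_low t = move_low t'"
    using path_odd_aux(2)[of i] path_odd_aux(2)[of i'] i eq calculation unfolding t_def t'_def by simp
  ultimately have "(gray m r t)(move_coord t := m + move_low t) = (gray m r t')(move_coord t := m + move_low t)"
    using eq i unfolding path_def t_def t'_def by simp
  then have same_upd: "(gray m r t)(move_coord t := v) = (gray m r t')(move_coord t := v)" for v
    by (metis fun_upd_upd)
  have "{gray m r t, gray m r (Suc t)} = {gray m r t', gray m r (Suc t')}"
    using gray_move_pair_eq[OF gray_move_at(2)[OF t(1)]] gray_move_pair_eq[OF gray_move_at(2)[OF t(2)]]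
      same_upd \<open>move_coord t = move_coord t'\<close> \<open>move_low t = move_low t'\<close> by simp
  then have "gray m r ` {t, Suc t} = gray m r ` {t', Suc t'}"
    by simp
  then have "{t, Suc t} = {t', Suc t'}"
    using inj_on_image_eq_iff[OF inj_on_gray, where A = "{t, Suc t}" and B = "{t', Suc t'}"] t by simp
  then have "t = t'"
    by (auto simp: doubleton_eq_iff)
  with i show ?thesis
    unfolding t_def t'_def by presburger
qed

lemma inj_on_path: "inj_on path {..path_length}"
proof (rule inj_onI)
  fix i i' assume "i \<in> {..path_length}" "i' \<in> {..path_length}" and eq: "path i = path i'"
  then have i: "i \<le> path_length" "i' \<le> path_length"
    by simp_all
  consider "even i" "even i'" | "odd i" "even i'" | "even i" "odd i'" | "odd i" "odd i'"
    by blast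
  then show "i = i'"
  proof cases
    case 1
    then have "gray m r (i div 2) = gray m r (i' div 2)"
      using eq by (simp add: path_def)
    then have "i div 2 = i' div 2"
      using inj_on_gray path_index_bound i by (auto dest: inj_onD)
    with 1 show ?thesis
      by presburger
  next
    case 2
    then show ?thesis
      using path_odd_aux[of i] path_even_less[of i'] i eq by fastforce
  next
    case 3
    then show ?thesis
      using path_odd_aux[of i'] path_even_less[of i] i eq by fastforce
  next
    case 4
    then show ?thesis
      using path_odd_inject i eq by blast
  qed
qed

lemma path_step_facet:
  assumes "i < path_length" "l \<le> path_length" "transversal (path l) \<subseteq> path_step i"
  shows "l = i \<or> l = Suc i"
proof -
  obtain j c y where y: "move_end j c y" and pair: "{path i, path (Suc i)} = {y, y(j := m + c)}"
    using path_step_eq[OF assms(1)] .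
  have "path_step i = transversal y \<union> transversal (y(j := m + c))"
    using pair unfolding path_step_def by (auto simp: doubleton_eq_iff)
  moreover have "\<forall>k. k \<noteq> j \<longrightarrow> y k = (y(j := m + c)) k"
    by simp
  ultimately have "path l = y \<or> path l = y(j := m + c)"
    using in_grid_eq_if_transversal_subset[OF move_end_in_grid[OF y] move_end_aux_in_grid[OF y]
        path_in_grid[OF assms(2)]] assms(3) by blast
  then have "path l = path i \<or> path l = path (Suc i)"
    using pair by (auto simp: doubleton_eq_iff)
  then show ?thesis
    using inj_on_path assms(1,2) by (auto dest: inj_onD)
qed

lemma live_transversal_path: "l \<le> path_length \<Longrightarrow> live (transversal (path l))"
proof (cases "l < path_length")
  case True
  then show ?thesis
    using step_set_path_step unfolding live_def path_step_def by blast
next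
  case False
  assume "l \<le> path_length"
  then have "l = Suc (l - 1)" "l - 1 < path_length"
    using False path_length_pos by auto
  then show ?thesis
    using step_set_path_step unfolding live_def path_step_def by (metis Un_upper2)
qed

lemma step_set_imp_path_step:
  assumes "step_set T"
  obtains i where "i < path_length" "T = path_step i"
proof -
  obtain j c y where y: "move_end j c y" and T: "T = insert (vert j (m + c)) (transversal y)"
    using assms unfolding step_set_def by blast
  define y0 where "y0 = y(j := c)"
  have move: "gray_move m j c y0 (y0(j := Suc c))"
    using y unfolding move_end_def gray_move_def y0_def by auto
  have "\<exists>t. Suc t < m ^ r \<and> {gray m r t, gray m r (Suc t)} = {y0, y0(j := Suc c)}"
    by (rule gray_move_occurs) (use y in \<open>auto simp: move_end_def y0_def\<close>)
  then obtain t where t: "Suc t < m ^ r" and pair: "{gray m r t, gray m r (Suc t)} = {y0, y0(j := Suc c)}"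
    by blast
  have "gray_move m j c (gray m r t) (gray m r (Suc t))"
    using gray_move_pair[OF move pair] .
  then have "move_coord t = j" "move_low t = c"
    unfolding move_coord_def move_low_def using gray_move_coord_low by simp_all
  moreover have "y(j := m + c) = (gray m r t)(j := m + c)"
    using pair unfolding y0_def by (auto simp: doubleton_eq_iff)
  ultimately have odd_step: "path (Suc (2 * t)) = y(j := m + c)"
    by (simp add: path_def)
  have T_Un: "T = transversal y \<union> transversal (y(j := m + c))"
    using T transversal_Un_upd y by (simp add: move_end_def)
  have "Suc (2 * t) < path_length"
    using t by (simp add: path_length_def)
  have "y = y0 \<or> y = y0(j := Suc c)"
    using y unfolding move_end_def y0_def by auto
  then have "y = path (2 * t) \<or> y = path (Suc (Suc (2 * t)))"
    using pair by (auto simp: path_def doubleton_eq_iff)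
  then show ?thesis
  proof
    assume "y = path (2 * t)"
    then have "T = path_step (2 * t)"
      using T_Un odd_step by (simp add: path_step_def)
    moreover have "2 * t < path_length"
      using \<open>Suc (2 * t) < path_length\<close> by simp
    ultimately show ?thesis
      using that by simp
  next
    assume "y = path (Suc (Suc (2 * t)))"
    then have "T = path_step (Suc (2 * t))"
      using T_Un odd_step by (simp add: path_step_def Un_commute)
    then show ?thesis
      using that \<open>Suc (2 * t) < path_length\<close> by simp
  qed
qed

lemma transversal_path_inject:
  assumes "l \<le> path_length" "l' \<le> path_length" "transversal (path l) = transversal (path l')"
  shows "l = l'"
proof -
  have "path l = path l'"
    using transversal_inject[OF path_in_grid path_in_grid] assms by blast
  then show ?thesis
    using inj_onD[OF inj_on_path] assms(1,2) by simp
qed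

lemma card_transversal_path: "l \<le> path_length \<Longrightarrow> card (transversal (path l)) = r"
  using card_transversal path_in_grid by blast

end

section \<open>The slow process\<close>

locale snake_process = snake_grid +
  fixes n :: nat
  assumes three_le_r: "3 \<le> r" and n_ge: "2 * m * r \<le> n"
begin

definition seed :: "nat set set" where
  "seed = {f. card f = r \<and> live f} - (\<lambda>l. transversal (path l)) ` {1..path_length}"

definition infected :: "nat \<Rightarrow> nat set set" where
  "infected k = seed \<union> (\<lambda>l. transversal (path l)) ` {..k}"

lemma mem_infected_iff:
  assumes "k \<le> path_length"
  shows "f \<in> infected k \<longleftrightarrow>
    card f = r \<and> live f \<and> (\<forall>l. k < l \<and> l \<le> path_length \<longrightarrow> f \<noteq> transversal (path l))"
proof
  assume "f \<in> infected k"
  then consider "f \<in> seed" | l where "l \<le> k" "f = transversal (path l)"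
    unfolding infected_def by blast
  then show "card f = r \<and> live f \<and> (\<forall>l. k < l \<and> l \<le> path_length \<longrightarrow> f \<noteq> transversal (path l))"
  proof cases
    case 1
    then show ?thesis
      unfolding seed_def by auto
  next
    case (2 l)
    then show ?thesis
      using assms transversal_path_inject[of l] card_transversal_path live_transversal_path by fastforce
  qed
next
  assume f: "card f = r \<and> live f \<and> (\<forall>l. k < l \<and> l \<le> path_length \<longrightarrow> f \<noteq> transversal (path l))"
  show "f \<in> infected k"
  proof (cases "f \<in> (\<lambda>l. transversal (path l)) ` {1..path_length}")
    case True
    then obtain l where "l \<le> path_length" "f = transversal (path l)"
      by auto
    with f have "l \<le> k"
      using not_le by blast
    with \<open>f = transversal (path l)\<close> show ?thesis
      unfolding infected_def by auto
  next
    case False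
    with f show ?thesis
      unfolding infected_def seed_def by auto
  qed
qed

lemma uninfected_facets_of_path_step:
  assumes "i < path_length" "k \<le> path_length"
  shows "{f. f \<subseteq> path_step i \<and> card f = r} - infected k
    = (\<lambda>l. transversal (path l)) ` ({i, Suc i} \<inter> {k<..})"
proof
  show "{f. f \<subseteq> path_step i \<and> card f = r} - infected k
      \<subseteq> (\<lambda>l. transversal (path l)) ` ({i, Suc i} \<inter> {k<..})"
  proof
    fix f assume f: "f \<in> {f. f \<subseteq> path_step i \<and> card f = r} - infected k"
    have "live f"
      using f step_set_path_step[OF assms(1)] unfolding live_def by auto
    then obtain l where l: "k < l" "l \<le> path_length" "f = transversal (path l)"
      using f mem_infected_iff[OF assms(2)] by auto
    then have "l = i \<or> l = Suc i"
      using path_step_facet[OF assms(1) l(2)] f by auto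
    with l show "f \<in> (\<lambda>l. transversal (path l)) ` ({i, Suc i} \<inter> {k<..})"
      by auto
  qed
next
  show "(\<lambda>l. transversal (path l)) ` ({i, Suc i} \<inter> {k<..})
      \<subseteq> {f. f \<subseteq> path_step i \<and> card f = r} - infected k"
  proof
    fix f assume "f \<in> (\<lambda>l. transversal (path l)) ` ({i, Suc i} \<inter> {k<..})"
    then obtain l where l: "l = i \<or> l = Suc i" "k < l" "f = transversal (path l)"
      by auto
    then have "l \<le> path_length"
      using assms(1) by auto
    then show "f \<in> {f. f \<subseteq> path_step i \<and> card f = r} - infected k"
      using l card_transversal_path mem_infected_iff[OF assms(2)] unfolding path_step_def by auto
  qed
qed

lemma path_step_subset_lessThan: "i < path_length \<Longrightarrow> path_step i \<subseteq> {..<n}"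
  using step_set_subset_lessThan[OF step_set_path_step] n_ge by fastforce

text \<open>This is where \<open>r \<ge> 3\<close> is used: a triggered (r+1)-set has \<open>r \<ge> 3\<close> infected,
  hence live, facets.\<close>

lemma triggered_is_path_step:
  assumes k: "k \<le> path_length" and S: "card S = Suc r"
    and trigger: "{f. f \<subseteq> S \<and> card f = r} - infected k = {e}"
  obtains i where "i < path_length" "S = path_step i"
proof -
  have facets: "{f. f \<subseteq> S \<and> card f = r} = (\<lambda>p. S - {p}) ` S"
    using facets_eq_Diff_singleton[OF S] .
  have "e \<in> {f. f \<subseteq> S \<and> card f = r} - infected k"
    unfolding trigger by simp
  then have "e \<in> (\<lambda>p. S - {p}) ` S"
    unfolding facets by simp
  then obtain pe where pe: "pe \<in> S" "e = S - {pe}"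
    by (rule imageE)
  have "3 \<le> card (S - {pe})"
    using S pe(1) three_le_r by simp
  then obtain P where "P \<subseteq> S - {pe}" "card P = 3"
    by (meson obtain_subset_with_card_n)
  then obtain p1 p2 p3 where "{p1, p2, p3} \<subseteq> S - {pe}" and p_ne: "p1 \<noteq> p2" "p1 \<noteq> p3" "p2 \<noteq> p3"
    by (metis card_3_iff)
  then have p: "p1 \<in> S" "p2 \<in> S" "p3 \<in> S" and ne: "p1 \<noteq> pe" "p2 \<noteq> pe" "p3 \<noteq> pe"
    by auto
  have live_facet: "live (S - {p})" if "p \<in> S" "p \<noteq> pe" for p
  proof -
    have "S - {p} \<in> {f. f \<subseteq> S \<and> card f = r}"
      unfolding facets using that(1) by (rule imageI)
    moreover have "S - {p} \<notin> {f. f \<subseteq> S \<and> card f = r} - infected k"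
      unfolding trigger using that pe by auto
    ultimately have "S - {p} \<in> infected k"
      by blast
    then show ?thesis
      using mem_infected_iff[OF k] by simp
  qed
  have "step_set S"
    by (rule step_set_if_three_live_facets[OF S p p_ne]) (use live_facet p ne in simp_all)
  then show thesis
    using that by (rule step_set_imp_path_step)
qed

lemma triggered_is_next:
  assumes k: "k \<le> path_length" and S: "card S = Suc r"
    and trigger: "{f. f \<subseteq> S \<and> card f = r} - infected k = {e}"
  shows "k < path_length \<and> e = transversal (path (Suc k))"
proof -
  obtain i where i: "i < path_length" "S = path_step i"
    using triggered_is_path_step[OF assms] .
  have new: "(\<lambda>l. transversal (path l)) ` ({i, Suc i} \<inter> {k<..}) = {e}"
    using uninfected_facets_of_path_step[OF i(1) k] trigger i(2) by simp
  have "\<not> k < i"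
  proof
    assume "k < i"
    then have "transversal (path i) \<in> {e}" "transversal (path (Suc i)) \<in> {e}"
      unfolding new[symmetric] by auto
    then show False
      using transversal_path_inject[of i "Suc i"] i(1) by simp
  qed
  moreover have "{i, Suc i} \<inter> {k<..} \<noteq> {}"
    using new by auto
  ultimately have "i = k"
    by auto
  with new i(1) show ?thesis
    by auto
qed

lemma boot_step_infected:
  assumes "k \<le> path_length"
  shows "boot_step r n (infected k)
    = (if k < path_length then insert (transversal (path (Suc k))) (infected k) else infected k)"
proof -
  define new where "new = {e \<in> complete_rgraph r n. \<exists>S. S \<subseteq> {..<n} \<and> card S = r + 1 \<and>
      {f. f \<subseteq> S \<and> card f = r} - infected k = {e}}"
  have step: "boot_step r n (infected k) = infected k \<union> new"
    unfolding boot_step_def new_def ..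
  have new_subset: "new \<subseteq> {transversal (path (Suc k))}" "k < path_length \<or> new = {}"
    using triggered_is_next[OF assms] unfolding new_def by auto
  have "transversal (path (Suc k)) \<in> new" if "k < path_length"
  proof -
    have "path_step k \<subseteq> {..<n}" "card (path_step k) = r + 1"
      using that path_step_subset_lessThan card_step_set[OF step_set_path_step] by simp_all
    moreover have "{f. f \<subseteq> path_step k \<and> card f = r} - infected k = {transversal (path (Suc k))}"
      using uninfected_facets_of_path_step[OF that assms] by auto
    moreover have "transversal (path (Suc k)) \<in> complete_rgraph r n"
      using \<open>path_step k \<subseteq> {..<n}\<close> card_transversal_path[of "Suc k"] that
      unfolding complete_rgraph_def path_step_def by auto
    ultimately show ?thesis
      unfolding new_def by blast
  qed
  with new_subset show ?thesis
    unfolding step by auto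
qed

lemma boot_gen_seed: "k \<le> path_length \<Longrightarrow> boot_gen r n seed k = infected k"
proof (induction k)
  case 0
  have "transversal (path 0) \<in> seed"
    unfolding seed_def using card_transversal_path[of 0] live_transversal_path[of 0]
      transversal_path_inject[of 0] by force
  then show ?case
    unfolding infected_def by (auto simp: boot_gen_0)
next
  case (Suc k)
  then have "boot_gen r n seed (Suc k) = insert (transversal (path (Suc k))) (infected k)"
    using boot_step_infected[of k] by (simp add: boot_gen_Suc)
  also have "\<dots> = infected (Suc k)"
    unfolding infected_def by (auto simp: atMost_Suc)
  finally show ?case .
qed

lemma running_time_seed: "running_time r n seed = path_length"
  unfolding running_time_def
proof (rule Least_equality)
  show "boot_gen r n seed path_length = boot_gen r n seed (Suc path_length)"
    using boot_gen_seed[of path_length] boot_step_infected[of path_length] by (simp add: boot_gen_Suc)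
next
  fix i assume eq: "boot_gen r n seed i = boot_gen r n seed (Suc i)"
  show "path_length \<le> i"
  proof (rule ccontr)
    assume "\<not> path_length \<le> i"
    then have "transversal (path (Suc i)) \<in> infected (Suc i) - infected i"
      using mem_infected_iff[of i] unfolding infected_def by auto
    then show False
      using eq boot_gen_seed[of i] boot_gen_seed[of "Suc i"] \<open>\<not> path_length \<le> i\<close> by auto
  qed
qed

lemma seed_subset_complete_rgraph: "seed \<subseteq> complete_rgraph r n"
proof
  fix f assume "f \<in> seed"
  then obtain T where "card f = r" "step_set T" "f \<subseteq> T"
    unfolding seed_def live_def by auto
  then show "f \<in> complete_rgraph r n"
    using step_set_subset_lessThan n_ge unfolding complete_rgraph_def by fastforce
qed

lemma path_length_le_max_running_time: "path_length \<le> max_running_time r n"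
  using running_time_le_max_running_time[OF seed_subset_complete_rgraph] running_time_seed by simp

end

section \<open>Lower bound\<close>

lemma div_part_size_bounds:
  fixes r n :: nat
  assumes "0 < r" "2 * r * r \<le> n"
  shows "r \<le> n div (2 * r)" and "2 * (n div (2 * r)) * r \<le> n" and "n < 2 * r * (n div (2 * r) + 1)"
proof -
  show "r \<le> n div (2 * r)"
    using div_le_mono[OF assms(2), of "2 * r"] assms(1) by simp
  show "2 * (n div (2 * r)) * r \<le> n"
    using div_times_less_eq_dividend[of n "2 * r"] by (simp add: algebra_simps)
  have "n mod (2 * r) < 2 * r"
    using assms(1) by simp
  then show "n < 2 * r * (n div (2 * r) + 1)"
    using div_mult_mod_eq[of n "2 * r"] by (simp add: algebra_simps)
qed

lemma Suc_pow_le_three_mult_pow: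
  assumes "0 < m" "r \<le> m"
  shows "(real m + 1) ^ r \<le> 3 * real m ^ r"
proof -
  have "(1 + 1 / real m) ^ r \<le> exp (1 / real m) ^ r"
    by (intro power_mono) (use exp_ge_add_one_self in auto)
  also have "\<dots> = exp (real r / real m)"
    by (simp add: exp_of_nat_mult[symmetric])
  also have "\<dots> \<le> exp 1"
    using assms by simp
  also have "\<dots> \<le> 3"
    using exp_le by simp
  finally have "(1 + 1 / real m) ^ r \<le> 3" .
  moreover have "(real m + 1) ^ r = real m ^ r * (1 + 1 / real m) ^ r"
    using assms(1) by (simp add: field_simps flip: power_mult_distrib)
  ultimately show ?thesis
    by (metis mult.commute mult_left_mono zero_le_power of_nat_0_le_iff)
qed

lemma lower_bound_le_path_length:
  fixes r m n :: nat
  assumes "0 < r" "2 \<le> m" "r \<le> m" "n < 2 * r * (m + 1)"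
  shows "real n ^ r / (2 ^ (r + 3) * real r ^ r) \<le> real (2 * (m ^ r - 1))"
proof -
  define x where "x = real n / (2 * real r)"
  have "real n < real (2 * r * (m + 1))"
    using assms(4) by (simp only: of_nat_less_iff)
  then have "x < real m + 1"
    using assms(1) unfolding x_def by (simp add: field_simps)
  then have "x ^ r \<le> (real m + 1) ^ r"
    by (intro power_mono) (simp_all add: x_def)
  also have "\<dots> \<le> 3 * real m ^ r"
    using Suc_pow_le_three_mult_pow[of m r] assms by simp
  finally have "x ^ r \<le> 3 * real m ^ r" .
  moreover have "real n ^ r / (2 ^ (r + 3) * real r ^ r) = x ^ r / 8"
    unfolding x_def by (simp add: power_divide power_mult_distrib power_add field_simps)
  moreover have "2 \<le> m ^ r"
    using assms(2) power_increasing[of 1 r m] assms(1) by simp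
  then have "real (2 * (m ^ r - 1)) = 2 * real m ^ r - 2"
    by (simp add: of_nat_diff)
  moreover have "2 \<le> real m ^ r"
    using \<open>2 \<le> m ^ r\<close> by (metis of_nat_numeral of_nat_le_iff of_nat_power)
  ultimately show ?thesis
    by simp
qed

theorem theorem1p1:
  fixes r n :: nat
  assumes "r \<ge> 3" and "n \<ge> 2 * r ^ 2"
  shows "real n ^ r / (2 ^ (r + 3) * real r ^ r) \<le> real (max_running_time r n)
         \<and> real (max_running_time r n) \<le> real n ^ r * exp (real r) / real r ^ r"
proof
  define m where "m = n div (2 * r)"
  have "2 * r * r \<le> n"
    using assms(2) by (simp add: power2_eq_square)
  then have m: "r \<le> m" "2 * m * r \<le> n" "n < 2 * r * (m + 1)"
    using div_part_size_bounds[of r n] assms(1) unfolding m_def by simp_all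
  interpret snake_process m r n
    using assms(1) m by unfold_locales auto
  have "real n ^ r / (2 ^ (r + 3) * real r ^ r) \<le> real path_length"
    unfolding path_length_def using lower_bound_le_path_length[of r m n] assms(1) m by simp
  also have "\<dots> \<le> real (max_running_time r n)"
    using path_length_le_max_running_time by simp
  finally show "real n ^ r / (2 ^ (r + 3) * real r ^ r) \<le> real (max_running_time r n)" .
next
  have "real (max_running_time r n) \<le> real (n choose r)"
    using max_running_time_le_binomial by simp
  also have "\<dots> \<le> real n ^ r * exp (real r) / real r ^ r"
    by (rule binomial_le_exp_pow)
  finally show "real (max_running_time r n) \<le> real n ^ r * exp (real r) / real r ^ r" .
qed

end
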